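(* Let $G=(V,w,m)$ be a locally finite measured weighted graph and let $K>0$. Suppose $\operatorname{Deg}_{\max}\le1$, $m(V)=\sum_{x\in V}m(x)=1$, and $\kappa(x,y)\ge K$ for all $x\neq y\in V$. Let $f\in\ell^1(V,m)$ satisfy $\langle f\rangle=0$ and $\|\nabla f\|_\infty\le1$. Then for every $r>0$, $$m(\{x\in V: f(x)>r\})\le e^{-Kr^2}.$$
   Context: A measured weighted graph $G=(V,w,m)$: countable $V$, symmetric $w:V\times V\to[0,\infty)$ vanishing on the diagonal, $m:V\to(0,\infty)$; $x\sim y$ iff $w(x,y)>0$; locally finite means each vertex has finitely many neighbours. $q(x,y):=w(x,y)/m(x)$, $\Delta f(x):=\sum_y q(x,y)(f(y)-f(x))$, $\operatorname{Deg}_{\max}:=\sup_x\sum_y q(x,y)$. $d$ is the combinatorial graph distance. For $x\ne y$, $\nabla_{xy}f:=(f(x)-f(y))/d(x,y)$, $\|\nabla f\|_\infty:=\sup_{x\sim y}\nabla_{xy}f$, and the Ollivier curvature is $\kappa(x,y):=\inf\{\nabla_{xy}\Delta f: \nabla_{yx}f=1,\ \|\nabla f\|_\infty=1\}$. $\ell^1(V,m)=\{g:V\to\mathbb{R}:\sum_x m(x)|g(x)|<\infty\}$, $\langle g\rangle:=\sum_x m(x)g(x)$, and $m(A):=\sum_{x\in A}m(x)$. *)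

theory Defs
  imports "HOL-Analysis.Analysis"
begin

definition mwgraph :: "('v::countable \<Rightarrow> 'v \<Rightarrow> real) \<Rightarrow> ('v \<Rightarrow> real) \<Rightarrow> bool" where
  "mwgraph w m \<longleftrightarrow> (\<forall>x y. w x y = w y x) \<and> (\<forall>x y. 0 \<le> w x y) \<and> (\<forall>x. w x x = 0)
      \<and> (\<forall>x. 0 < m x)"

definition adj :: "('v \<Rightarrow> 'v \<Rightarrow> real) \<Rightarrow> 'v \<Rightarrow> 'v \<Rightarrow> bool" where
  "adj w x y \<longleftrightarrow> 0 < w x y"

definition nbrs :: "('v \<Rightarrow> 'v \<Rightarrow> real) \<Rightarrow> 'v \<Rightarrow> 'v set" where
  "nbrs w x = {y. adj w x y}"

definition locally_finite :: "('v \<Rightarrow> 'v \<Rightarrow> real) \<Rightarrow> bool" where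
  "locally_finite w \<longleftrightarrow> (\<forall>x. finite (nbrs w x))"

definition connected_graph :: "('v \<Rightarrow> 'v \<Rightarrow> real) \<Rightarrow> bool" where
  "connected_graph w \<longleftrightarrow> (\<forall>x y. \<exists>n. (adj w ^^ n) x y)"

definition gdist :: "('v \<Rightarrow> 'v \<Rightarrow> real) \<Rightarrow> 'v \<Rightarrow> 'v \<Rightarrow> nat" where
  "gdist w x y = (LEAST n. (adj w ^^ n) x y)"

definition qrate :: "('v \<Rightarrow> 'v \<Rightarrow> real) \<Rightarrow> ('v \<Rightarrow> real) \<Rightarrow> 'v \<Rightarrow> 'v \<Rightarrow> real" where
  "qrate w m x y = w x y / m x"

text \<open>Laplacian; sum over the (finite) neighbourhood, other terms vanish.\<close>
definition laplacian :: "('v \<Rightarrow> 'v \<Rightarrow> real) \<Rightarrow> ('v \<Rightarrow> real) \<Rightarrow> ('v \<Rightarrow> real) \<Rightarrow> 'v \<Rightarrow> real" where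
  "laplacian w m f x = (\<Sum>y\<in>nbrs w x. qrate w m x y * (f y - f x))"

definition Deg_max :: "('v \<Rightarrow> 'v \<Rightarrow> real) \<Rightarrow> ('v \<Rightarrow> real) \<Rightarrow> ereal" where
  "Deg_max w m = (SUP x. ereal (\<Sum>y\<in>nbrs w x. qrate w m x y))"

definition grad :: "('v \<Rightarrow> 'v \<Rightarrow> real) \<Rightarrow> ('v \<Rightarrow> real) \<Rightarrow> 'v \<Rightarrow> 'v \<Rightarrow> real" where
  "grad w f x y = (f x - f y) / real (gdist w x y)"

definition grad_norm :: "('v \<Rightarrow> 'v \<Rightarrow> real) \<Rightarrow> ('v \<Rightarrow> real) \<Rightarrow> ereal" where
  "grad_norm w f = (SUP p\<in>{(x, y). adj w x y}. ereal (grad w f (fst p) (snd p)))"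

definition ollivier :: "('v \<Rightarrow> 'v \<Rightarrow> real) \<Rightarrow> ('v \<Rightarrow> real) \<Rightarrow> 'v \<Rightarrow> 'v \<Rightarrow> ereal" where
  "ollivier w m x y = (INF f\<in>{f. grad w f y x = 1 \<and> grad_norm w f = 1}.
       ereal (grad w (laplacian w m f) x y))"

end

theory Submission
  imports Defs "HOL-Library.Function_Algebras"
begin

text \<open>Curvature \<open>\<ge> K > 0\<close> bounds the diameter by \<open>2 / K\<close> (a discrete Bonnet--Myers theorem), so
  the graph is finite and the Poisson equation \<open>\<Delta>u = -f\<close> is solvable for mean-zero \<open>f\<close>. Testing
  the curvature on \<open>u\<close>, normalised along an edge of maximal slope, shows that \<open>u\<close> is
  \<open>1 / K\<close>-Lipschitz. Green's formula then bounds the derivative of the Laplace transform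
  \<open>Z(t) = \<langle>exp (t f)\<rangle>\<close> by \<open>Z'(t) \<le> t / (2 K) Z(t)\<close>, so \<open>Z(t) \<le> exp (t\<^sup>2 / (4 K))\<close> (Herbst's
  argument), and the exponential Chebyshev inequality at \<open>t = 2 K r\<close> gives the Gaussian tail.\<close>

lemma exp_sub_one_le:
  fixes h :: real
  assumes "0 \<le> h"
  shows "exp h - 1 \<le> h / 2 * (exp h + 1)"
proof -
  define \<phi> where "\<phi> t = t / 2 * (exp t + 1) - exp t + 1" for t :: real
  have "\<phi> 0 \<le> \<phi> h"
  proof (rule DERIV_nonneg_imp_nondecreasing[OF assms])
    fix t :: real
    have "(\<phi> has_real_derivative (1 + t * exp t - exp t) / 2) (at t)"
      unfolding \<phi>_def by (auto intro!: derivative_eq_intros simp: field_simps)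
    moreover have "exp t * (1 - t) \<le> 1"
      using mult_left_mono[OF exp_ge_add_one_self[of "-t"], of "exp t"]
      by (simp add: exp_minus_inverse algebra_simps)
    ultimately show "\<exists>y. (\<phi> has_real_derivative y) (at t) \<and> 0 \<le> y"
      by (auto simp: algebra_simps)
  qed
  then show ?thesis by (simp add: \<phi>_def)
qed

lemma abs_exp_diff_le:
  fixes a b c :: real
  assumes "\<bar>a - b\<bar> \<le> c"
  shows "\<bar>exp a - exp b\<bar> \<le> c / 2 * (exp a + exp b)"
proof -
  have *: "exp x - exp y \<le> c / 2 * (exp x + exp y)" if "y \<le> x" "x - y \<le> c" for x y :: real
  proof -
    have "exp x - exp y = exp y * (exp (x - y) - 1)"
      by (simp add: algebra_simps flip: exp_add)
    also have "\<dots> \<le> exp y * ((x - y) / 2 * (exp (x - y) + 1))"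
      using exp_sub_one_le[of "x - y"] that by simp
    also have "\<dots> = (x - y) / 2 * (exp x + exp y)"
      by (simp add: algebra_simps flip: exp_add)
    also have "\<dots> \<le> c / 2 * (exp x + exp y)"
      using that by (intro mult_right_mono) auto
    finally show ?thesis .
  qed
  show ?thesis
    using *[of b a] *[of a b] assms by (cases "b \<le> a") (auto simp: add.commute)
qed

lemma herbst_bound:
  fixes Z Z' :: "real \<Rightarrow> real"
  assumes deriv: "\<And>s. (Z has_real_derivative Z' s) (at s)"
    and deriv_le: "\<And>s. 0 \<le> s \<Longrightarrow> Z' s \<le> c * s * Z s"
    and "0 \<le> t"
  shows "Z t \<le> Z 0 * exp (c * t\<^sup>2 / 2)"
proof -
  define \<psi> where "\<psi> s = Z s * exp (- c * s\<^sup>2 / 2)" for s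
  have "\<psi> t \<le> \<psi> 0"
  proof (rule DERIV_nonpos_imp_nonincreasing[OF \<open>0 \<le> t\<close>])
    fix s :: real
    assume "0 \<le> s"
    have "(\<psi> has_real_derivative exp (- c * s\<^sup>2 / 2) * (Z' s - c * s * Z s)) (at s)"
      unfolding \<psi>_def by (auto intro!: derivative_eq_intros deriv simp: algebra_simps power2_eq_square)
    moreover have "exp (- c * s\<^sup>2 / 2) * (Z' s - c * s * Z s) \<le> 0"
      using deriv_le[OF \<open>0 \<le> s\<close>] by (simp add: mult_nonneg_nonpos)
    ultimately show "\<exists>y. (\<psi> has_real_derivative y) (at s) \<and> y \<le> 0" by blast
  qed
  then have "Z t * exp (- c * t\<^sup>2 / 2) * exp (c * t\<^sup>2 / 2) \<le> Z 0 * exp (c * t\<^sup>2 / 2)"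
    by (intro mult_right_mono) (simp_all add: \<psi>_def)
  then show ?thesis by (simp add: mult.assoc flip: exp_add)
qed

lemma exponential_chebyshev:
  fixes m f :: "'a \<Rightarrow> real"
  assumes "finite S" and "\<And>x. x \<in> S \<Longrightarrow> 0 \<le> m x" and "0 \<le> t"
  shows "(\<Sum>x\<in>{x\<in>S. f x > r}. m x) \<le> exp (- t * r) * (\<Sum>x\<in>S. m x * exp (t * f x))"
proof -
  have "(\<Sum>x\<in>{x\<in>S. f x > r}. m x) \<le> (\<Sum>x\<in>{x\<in>S. f x > r}. m x * exp (t * (f x - r)))"
  proof (rule sum_mono)
    fix x assume "x \<in> {x\<in>S. f x > r}"
    then have "m x * 1 \<le> m x * exp (t * (f x - r))"
      using assms by (intro mult_left_mono) auto
    then show "m x \<le> m x * exp (t * (f x - r))" by simp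
  qed
  also have "\<dots> \<le> (\<Sum>x\<in>S. m x * exp (t * (f x - r)))"
    using assms by (intro sum_mono2) auto
  also have "\<dots> = exp (- t * r) * (\<Sum>x\<in>S. m x * exp (t * f x))"
    by (simp add: sum_distrib_left algebra_simps flip: exp_add)
  finally show ?thesis .
qed

lemma surj_if_inj_linear_fun:
  fixes T :: "('a \<Rightarrow> 'b::field) \<Rightarrow> 'a \<Rightarrow> 'b"
  assumes finite: "finite (UNIV :: 'a set)"
    and add: "\<And>u v. T (u + v) = T u + T v"
    and scale: "\<And>c u. T (\<lambda>x. c * u x) = (\<lambda>x. c * T u x)"
    and "inj T"
  shows "surj T"
proof -
  define sc :: "'b \<Rightarrow> ('a \<Rightarrow> 'b) \<Rightarrow> 'a \<Rightarrow> 'b" where "sc c u x = c * u x" for c u x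
  interpret vs: vector_space sc
    by unfold_locales (auto simp: sc_def algebra_simps fun_eq_iff)
  define \<delta> :: "'a \<Rightarrow> 'a \<Rightarrow> 'b" where "\<delta> a x = (if x = a then 1 else 0)" for a x
  have sum_apply: "(\<Sum>a\<in>A. F a) x = (\<Sum>a\<in>A. F a x)" if "finite A" for A F x
    using that by induction auto
  have span_\<delta>: "u \<in> vs.span (range \<delta>)" for u
  proof -
    have "u = (\<Sum>a\<in>UNIV. sc (u a) (\<delta> a))"
      using finite by (simp add: fun_eq_iff sum_apply sc_def \<delta>_def if_distrib[of "(*) _"] cong: if_cong)
    also have "\<dots> \<in> vs.span (range \<delta>)"
      by (intro vs.span_sum vs.span_scale vs.span_base) auto
    finally show ?thesis .
  qed
  obtain B where B: "vs.independent B" "UNIV \<subseteq> vs.span B"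
    using vs.basis_exists[of UNIV] by blast
  have "finite B"
    using vs.independent_span_bound[OF finite_imageI[OF finite] B(1)] span_\<delta> by blast
  then interpret fd: finite_dimensional_vector_space sc B
    by unfold_locales (use B in auto)
  have "Vector_Spaces.linear sc sc T"
    using vs.vector_space_axioms add scale
    by (auto simp: Vector_Spaces.linear_iff sc_def[abs_def])
  then show ?thesis by (rule fd.linear_inj_imp_surj[OF _ \<open>inj T\<close>])
qed

lemma laplacian_add: "laplacian w m (\<lambda>x. u x + v x) x = laplacian w m u x + laplacian w m v x"
  unfolding laplacian_def by (simp add: algebra_simps flip: sum.distrib)

lemma laplacian_scale: "laplacian w m (\<lambda>x. c * u x) x = c * laplacian w m u x"
  unfolding laplacian_def by (simp add: sum_distrib_left algebra_simps)

lemma ollivier_le_grad_laplacian: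
  assumes "grad w g y x = 1" and "grad_norm w g = 1"
  shows "ollivier w m x y \<le> grad w (laplacian w m g) x y"
  unfolding ollivier_def using assms by (intro INF_lower) auto

locale connected_mwgraph =
  fixes w :: "'v::countable \<Rightarrow> 'v \<Rightarrow> real" and m :: "'v \<Rightarrow> real"
  assumes mwgraph: "mwgraph w m" and connected: "connected_graph w"
begin

lemma weight_sym: "w x y = w y x"
  and weight_nonneg: "0 \<le> w x y"
  and measure_pos: "0 < m x"
  using mwgraph unfolding mwgraph_def by auto

lemma adj_sym: "adj w x y \<longleftrightarrow> adj w y x"
  by (simp add: adj_def weight_sym)

lemma not_adj_refl: "\<not> adj w x x"
  using mwgraph by (simp add: adj_def mwgraph_def)

lemma weight_eq_0_if_not_adj: "\<not> adj w x y \<Longrightarrow> w x y = 0"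
  using weight_nonneg[of x y] by (simp add: adj_def)

lemma relpowp_adj_sym: "(adj w ^^ n) x y \<Longrightarrow> (adj w ^^ n) y x"
proof (induction n arbitrary: y)
  case (Suc n)
  then obtain z where "(adj w ^^ n) x z" "adj w z y"
    by (blast elim: relpowp_Suc_E)
  then show ?case
    using Suc.IH adj_sym by (blast intro: relpowp_Suc_I2)
qed simp

lemma relpowp_gdist: "(adj w ^^ gdist w x y) x y"
  using connected unfolding connected_graph_def gdist_def by (meson LeastI_ex)

lemma gdist_le: "(adj w ^^ n) x y \<Longrightarrow> gdist w x y \<le> n"
  unfolding gdist_def by (rule Least_le)

lemma gdist_eq_0_iff: "gdist w x y = 0 \<longleftrightarrow> x = y"
  using relpowp_gdist[of x y] gdist_le[of 0 x y] by auto

lemma gdist_refl [simp]: "gdist w x x = 0"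
  by (simp add: gdist_eq_0_iff)

lemma gdist_sym: "gdist w x y = gdist w y x"
  by (meson antisym gdist_le relpowp_gdist relpowp_adj_sym)

lemma gdist_adj: "adj w x y \<Longrightarrow> gdist w x y = 1"
  using gdist_le[of 1 x y] gdist_eq_0_iff[of x y] not_adj_refl by fastforce

lemma gdist_le_adj: "adj w y z \<Longrightarrow> gdist w x z \<le> gdist w x y + 1"
  using gdist_le relpowp_Suc_I[OF relpowp_gdist] by fastforce

lemma grad_adj: "adj w x y \<Longrightarrow> grad w g x y = g x - g y"
  by (simp add: grad_def gdist_adj)

lemma grad_norm_le_1_iff: "grad_norm w g \<le> 1 \<longleftrightarrow> (\<forall>a b. adj w a b \<longrightarrow> g a - g b \<le> 1)"
  unfolding grad_norm_def by (auto simp: SUP_le_iff grad_adj)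

lemma grad_norm_eq_1:
  assumes "\<And>a b. adj w a b \<Longrightarrow> g a - g b \<le> 1" and "adj w a b" and "g a - g b = 1"
  shows "grad_norm w g = 1"
proof (rule antisym)
  show "grad_norm w g \<le> 1"
    using assms(1) grad_norm_le_1_iff by blast
  have "ereal (grad w g a b) \<le> grad_norm w g"
    unfolding grad_norm_def using assms(2) by (intro SUP_upper2[of "(a, b)"]) auto
  then show "1 \<le> grad_norm w g"
    using assms(2,3) by (simp add: grad_adj one_ereal_def)
qed

lemma finite_vertices_if_gdist_bounded:
  assumes "locally_finite w" and "\<And>y. gdist w x y \<le> n"
  shows "finite (UNIV :: 'v set)"
proof -
  define reach where "reach k = {y. (adj w ^^ k) x y}" for k
  have "finite (reach k)" for k
  proof (induction k)
    case 0
    then show ?case by (simp add: reach_def)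
  next
    case (Suc k)
    have "reach (Suc k) \<subseteq> (\<Union>z\<in>reach k. nbrs w z)"
      by (auto simp: reach_def nbrs_def elim: relpowp_Suc_E)
    moreover have "finite (\<Union>z\<in>reach k. nbrs w z)"
      using Suc assms(1) by (simp add: locally_finite_def)
    ultimately show ?case by (rule finite_subset)
  qed
  moreover have "UNIV \<subseteq> (\<Union>k\<le>n. reach k)"
    using relpowp_gdist assms(2) by (auto simp: reach_def)
  ultimately show ?thesis
    by (meson finite_UN_I finite_atMost finite_subset)
qed

end

locale finite_connected_mwgraph = connected_mwgraph w m
  for w :: "'v::countable \<Rightarrow> 'v \<Rightarrow> real" and m +
  assumes finite_vertices: "finite (UNIV :: 'v set)"
begin

lemma measure_times_laplacian: "m x * laplacian w m u x = (\<Sum>z\<in>UNIV. w x z * (u z - u x))"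
proof -
  have "m x * laplacian w m u x = (\<Sum>z\<in>nbrs w x. w x z * (u z - u x))"
    using measure_pos[of x] by (simp add: laplacian_def qrate_def sum_distrib_left)
  also have "\<dots> = (\<Sum>z\<in>UNIV. w x z * (u z - u x))"
    using finite_vertices by (intro sum.mono_neutral_left) (auto simp: nbrs_def weight_eq_0_if_not_adj)
  finally show ?thesis .
qed

lemma sum_weight_swap: "(\<Sum>x\<in>UNIV. \<Sum>z\<in>UNIV. w x z * F z x) = (\<Sum>x\<in>UNIV. \<Sum>z\<in>UNIV. w x z * F x z)"
  by (subst sum.swap) (simp add: weight_sym)

lemma green_formula:
  "(\<Sum>x\<in>UNIV. m x * g x * laplacian w m u x) = - (\<Sum>x\<in>UNIV. \<Sum>z\<in>UNIV. w x z * ((u x - u z) * (g x - g z))) / 2"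
proof -
  define A where "A = (\<Sum>x\<in>UNIV. \<Sum>z\<in>UNIV. w x z * ((u z - u x) * g x))"
  have "m x * g x * laplacian w m u x = (\<Sum>z\<in>UNIV. w x z * ((u z - u x) * g x))" for x
    using measure_times_laplacian[of x u] by (simp add: sum_distrib_left mult_ac)
  then have "(\<Sum>x\<in>UNIV. m x * g x * laplacian w m u x) = A"
    by (simp add: A_def)
  moreover have "A = (\<Sum>x\<in>UNIV. \<Sum>z\<in>UNIV. w x z * ((u x - u z) * g z))"
    unfolding A_def by (rule sum_weight_swap[symmetric])
  ultimately show ?thesis
    by (simp add: A_def algebra_simps sum_subtractf sum.distrib)
qed

lemma sum_measure_times_laplacian: "(\<Sum>x\<in>UNIV. m x * laplacian w m u x) = 0"
  using green_formula[of "\<lambda>_. 1" u] by simp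

lemma harmonic_imp_const:
  assumes "\<And>x. laplacian w m h x = 0"
  shows "h x = h y"
proof -
  have term_nonneg: "0 \<le> w x z * ((h x - h z) * (h x - h z))" for x z
    using weight_nonneg by simp
  have "(\<Sum>x\<in>UNIV. \<Sum>z\<in>UNIV. w x z * ((h x - h z) * (h x - h z))) = 0"
    using green_formula[of h h] assms by simp
  then have edge_term_eq_0: "w x z * ((h x - h z) * (h x - h z)) = 0" for x z
    using finite_vertices by (simp add: sum_nonneg_eq_0_iff sum_nonneg term_nonneg)
  have edge: "h x = h z" if "adj w x z" for x z
    using that edge_term_eq_0[of x z] by (simp add: adj_def)
  have "(adj w ^^ n) x y \<Longrightarrow> h x = h y" for n y
  proof (induction n arbitrary: y)
    case (Suc n)
    then show ?case by (metis edge relpowp_Suc_E)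
  qed simp
  then show ?thesis using relpowp_gdist by blast
qed

text \<open>The map \<open>u \<mapsto> -\<Delta>u + \<langle>u\<rangle>\<close> is injective, hence onto; its preimage of a mean-zero \<open>f\<close> solves
  the Poisson equation.\<close>
lemma poisson_solvable:
  assumes "(\<Sum>x\<in>UNIV. m x * f x) = 0"
  obtains u where "\<And>x. laplacian w m u x = - f x"
proof -
  define mean where "mean u = (\<Sum>z\<in>UNIV. m z * u z)" for u :: "'v \<Rightarrow> real"
  define T where "T u x = - laplacian w m u x + mean u" for u x
  have mass_pos: "0 < mean (\<lambda>_. 1)"
    using finite_vertices measure_pos by (simp add: mean_def sum_pos)
  have mean_T: "mean (T u) = mean u * mean (\<lambda>_. 1)" for u
  proof -
    have "mean (T u) = (\<Sum>x\<in>UNIV. - (m x * laplacian w m u x) + m x * mean u)"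
      unfolding mean_def[of "T u"] T_def by (simp add: algebra_simps)
    also have "\<dots> = mean u * mean (\<lambda>_. 1)"
      using sum_measure_times_laplacian[of u]
      by (simp add: sum_subtractf mean_def[of "\<lambda>_. 1"] sum_distrib_left mult.commute)
    finally show ?thesis .
  qed
  have T_add: "T (u + v) = T u + T v" for u v
    by (simp add: fun_eq_iff T_def mean_def plus_fun_def laplacian_add algebra_simps sum.distrib)
  have T_scale: "T (\<lambda>x. c * u x) = (\<lambda>x. c * T u x)" for c u
    by (simp add: fun_eq_iff T_def mean_def laplacian_scale algebra_simps sum_distrib_left)
  have kernel_trivial: "h = 0" if "T h = 0" for h
  proof -
    have "mean h = 0"
      using mean_T[of h] mass_pos \<open>T h = 0\<close> by (simp add: mean_def)
    then have "laplacian w m h x = 0" for x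
      using fun_cong[OF \<open>T h = 0\<close>, of x] by (simp add: T_def)
    then have const: "h z = h x" for x z
      by (rule harmonic_imp_const)
    have mean_const: "mean h = h x * mean (\<lambda>_. 1)" for x
      unfolding mean_def sum_distrib_left
    proof (intro sum.cong refl)
      fix z show "m z * h z = h x * (m z * 1)"
        using const[of x z] by simp
    qed
    show "h = 0"
      using mean_const \<open>mean h = 0\<close> mass_pos by (simp add: fun_eq_iff)
  qed
  have "inj T"
  proof (rule injI)
    fix u v
    assume "T u = T v"
    then have "T (u - v) = 0"
      using T_add[of v "u - v"] by simp
    then show "u = v"
      using kernel_trivial[of "u - v"] by simp
  qed
  then obtain u where "T u = f"
    using surj_if_inj_linear_fun[OF finite_vertices T_add T_scale] by (metis surjD)
  moreover from this have "mean u = 0"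
    using mean_T[of u] mass_pos assms by (simp add: mean_def)
  ultimately show thesis
    by (intro that) (auto simp: T_def)
qed

end

locale positively_curved_graph = connected_mwgraph w m
  for w :: "'v::countable \<Rightarrow> 'v \<Rightarrow> real" and m +
  fixes K :: real
  assumes locally_finite: "locally_finite w"
    and K_pos: "0 < K"
    and Deg_max_le_1: "Deg_max w m \<le> 1"
    and curvature_ge: "\<And>x y. x \<noteq> y \<Longrightarrow> ereal K \<le> ollivier w m x y"
begin

lemma qrate_nonneg: "0 \<le> qrate w m x y"
  by (simp add: qrate_def weight_nonneg measure_pos less_imp_le)

lemma degree_le_1: "(\<Sum>y\<in>nbrs w x. qrate w m x y) \<le> 1"
proof -
  have "ereal (\<Sum>y\<in>nbrs w x. qrate w m x y) \<le> Deg_max w m"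
    unfolding Deg_max_def by (rule SUP_upper) simp
  then have "ereal (\<Sum>y\<in>nbrs w x. qrate w m x y) \<le> 1"
    using Deg_max_le_1 by (rule order.trans)
  then show ?thesis by simp
qed

lemma abs_laplacian_le_1:
  assumes "\<And>z. adj w x z \<Longrightarrow> \<bar>g z - g x\<bar> \<le> 1"
  shows "\<bar>laplacian w m g x\<bar> \<le> 1"
proof -
  have "\<bar>laplacian w m g x\<bar> \<le> (\<Sum>z\<in>nbrs w x. qrate w m x z * \<bar>g z - g x\<bar>)"
    unfolding laplacian_def by (rule order.trans[OF sum_abs]) (simp add: abs_mult qrate_nonneg)
  also have "\<dots> \<le> (\<Sum>z\<in>nbrs w x. qrate w m x z)"
    using assms by (intro sum_mono mult_right_le_one_le) (auto simp: qrate_nonneg nbrs_def)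
  also have "\<dots> \<le> 1"
    by (rule degree_le_1)
  finally show ?thesis .
qed

lemma curvature_le_grad_laplacian:
  assumes "x \<noteq> y" and "grad w g y x = 1" and "grad_norm w g = 1"
  shows "K \<le> grad w (laplacian w m g) x y"
  using order.trans[OF curvature_ge[OF assms(1)] ollivier_le_grad_laplacian[OF assms(2,3)]] by simp

text \<open>Test the curvature on the distance function \<open>gdist w x\<close>.\<close>
lemma gdist_le_diameter: "K * real (gdist w x y) \<le> 2"
proof (cases "x = y")
  case False
  define f where "f z = real (gdist w x z)" for z
  have f_lip: "\<bar>f z' - f z\<bar> \<le> 1" if "adj w z z'" for z z'
    using that gdist_le_adj[of z z' x] gdist_le_adj[of z' z x] adj_sym by (force simp: f_def)
  have d_pos: "0 < gdist w x y"
    using False gdist_eq_0_iff by blast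
  then obtain x' where "adj w x x'"
    using relpowp_gdist[of x y] by (metis gr0_conv_Suc relpowp_Suc_D2)
  then have "grad_norm w f = 1"
    using f_lip adj_sym gdist_adj by (intro grad_norm_eq_1[of f x' x]) (auto simp: f_def abs_le_iff)
  moreover have "grad w f y x = 1"
    using d_pos by (simp add: grad_def f_def gdist_sym)
  ultimately have "K \<le> grad w (laplacian w m f) x y"
    using False by (intro curvature_le_grad_laplacian)
  also have "\<dots> \<le> 2 / gdist w x y"
  proof -
    have "\<bar>laplacian w m f x\<bar> \<le> 1" "\<bar>laplacian w m f y\<bar> \<le> 1"
      using f_lip by (auto intro!: abs_laplacian_le_1)
    then show ?thesis
      unfolding grad_def by (intro divide_right_mono) auto
  qed
  finally show ?thesis
    using d_pos by (simp add: field_simps)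
qed simp

sublocale finite_connected_mwgraph
proof
  define R where "R = nat \<lceil>2 / K\<rceil>"
  have "gdist w undefined y \<le> R" for y
  proof -
    have "real (gdist w undefined y) \<le> 2 / K"
      using gdist_le_diameter[of undefined y] K_pos by (simp add: pos_le_divide_eq mult.commute)
    then show ?thesis
      unfolding R_def by linarith
  qed
  then show "finite (UNIV :: 'v set)"
    by (rule finite_vertices_if_gdist_bounded[OF locally_finite])
qed

lemma weight_sum_le_measure: "(\<Sum>z\<in>UNIV. w x z) \<le> m x"
proof -
  have "(\<Sum>z\<in>UNIV. w x z) = (\<Sum>z\<in>nbrs w x. w x z)"
    using finite_vertices by (intro sum.mono_neutral_right) (auto simp: nbrs_def weight_eq_0_if_not_adj)
  also have "\<dots> = m x * (\<Sum>z\<in>nbrs w x. qrate w m x z)"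
    using measure_pos[of x] by (simp add: qrate_def sum_distrib_left)
  also have "\<dots> \<le> m x"
    using degree_le_1 measure_pos[of x] by (simp add: mult_left_le)
  finally show ?thesis .
qed

text \<open>If \<open>L > 0\<close> is the largest slope of \<open>u\<close> along an edge, attained at \<open>(a\<^sub>0, b\<^sub>0)\<close>, then
  \<open>u / L\<close> is admissible in the definition of \<open>ollivier w m b\<^sub>0 a\<^sub>0\<close>, so \<open>K \<le> (f a\<^sub>0 - f b\<^sub>0) / L \<le> 1 / L\<close>.\<close>
lemma poisson_solution_lipschitz:
  assumes poisson: "\<And>x. laplacian w m u x = - f x" and "grad_norm w f \<le> 1" and "adj w a b"
  shows "u a - u b \<le> 1 / K"
proof -
  define E where "E = {(x, y). adj w x y}"
  define slope where "slope p = u (fst p) - u (snd p)" for p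
  have "finite E"
    using finite_Prod_UNIV[OF finite_vertices finite_vertices] by (rule finite_subset[OF subset_UNIV])
  moreover have "(a, b) \<in> E"
    using \<open>adj w a b\<close> by (simp add: E_def)
  ultimately obtain a0 b0 where "adj w a0 b0" and max: "Max (slope ` E) = slope (a0, b0)"
    by (metis (no_types, lifting) E_def case_prodE empty_iff mem_Collect_eq obtains_MAX)
  define L where "L = u a0 - u b0"
  have slope_le: "u x - u y \<le> L" if "adj w x y" for x y
  proof -
    have "slope (x, y) \<le> Max (slope ` E)"
      using that \<open>finite E\<close> by (intro Max_ge) (auto simp: E_def)
    then show ?thesis
      unfolding max by (simp add: L_def slope_def)
  qed
  show ?thesis
  proof (cases "L \<le> 0")
    case True
    moreover have "0 < 1 / K"
      using K_pos by simp
    ultimately show ?thesis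
      using slope_le[OF \<open>adj w a b\<close>] by linarith
  next
    case False
    define g where "g z = u z / L" for z
    have "grad w g a0 b0 = 1"
      using \<open>adj w a0 b0\<close> False by (simp add: grad_adj g_def L_def diff_divide_distrib[symmetric])
    moreover have "grad_norm w g = 1"
    proof (rule grad_norm_eq_1[OF _ \<open>adj w a0 b0\<close>])
      show "g x - g y \<le> 1" if "adj w x y" for x y
        using slope_le[OF that] False by (simp add: g_def diff_divide_distrib[symmetric])
      show "g a0 - g b0 = 1"
        using False by (simp add: g_def L_def diff_divide_distrib[symmetric])
    qed
    ultimately have "K \<le> grad w (laplacian w m g) b0 a0"
      using \<open>adj w a0 b0\<close> not_adj_refl by (intro curvature_le_grad_laplacian) auto
    also have "\<dots> = (f a0 - f b0) / L"
    proof -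
      have "laplacian w m g x = - f x / L" for x
        using laplacian_scale[of w m "1 / L" u x] by (simp add: g_def[abs_def] poisson)
      then show ?thesis
        using \<open>adj w a0 b0\<close> adj_sym by (simp add: grad_adj diff_divide_distrib)
    qed
    also have "\<dots> \<le> 1 / L"
      using \<open>grad_norm w f \<le> 1\<close> \<open>adj w a0 b0\<close> False
      by (intro divide_right_mono) (auto simp: grad_norm_le_1_iff)
    finally have "L \<le> 1 / K"
      using False K_pos by (simp add: field_simps)
    then show ?thesis
      using slope_le[OF \<open>adj w a b\<close>] by simp
  qed
qed

lemma laplace_transform_deriv_le:
  assumes mean: "(\<Sum>x\<in>UNIV. m x * f x) = 0" and lip: "grad_norm w f \<le> 1" and "0 \<le> t"
  shows "(\<Sum>x\<in>UNIV. m x * f x * exp (t * f x)) \<le> t / (2 * K) * (\<Sum>x\<in>UNIV. m x * exp (t * f x))"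
proof -
  obtain u where poisson: "\<And>x. laplacian w m u x = - f x"
    using poisson_solvable[OF mean] by blast
  define e where "e x = exp (t * f x)" for x
  define c where "c = t / (2 * K)"
  have edge_le: "w x z * ((u x - u z) * (e x - e z)) \<le> w x z * (c * (e x + e z))" for x z
  proof (cases "adj w x z")
    case True
    have "u x - u z \<le> 1 / K" and "u z - u x \<le> 1 / K"
      using True adj_sym poisson_solution_lipschitz[OF poisson lip] by blast+
    then have "\<bar>u x - u z\<bar> \<le> 1 / K"
      by (simp add: abs_le_iff)
    moreover have "\<bar>f x - f z\<bar> \<le> 1"
      using True adj_sym lip by (auto simp: grad_norm_le_1_iff abs_le_iff)
    then have "\<bar>t * f x - t * f z\<bar> \<le> t"
      using \<open>0 \<le> t\<close> by (simp add: abs_mult mult_left_le flip: right_diff_distrib)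
    then have "\<bar>e x - e z\<bar> \<le> t / 2 * (e x + e z)"
      unfolding e_def by (rule abs_exp_diff_le)
    ultimately have "\<bar>u x - u z\<bar> * \<bar>e x - e z\<bar> \<le> 1 / K * (t / 2 * (e x + e z))"
      by (rule mult_mono) (use K_pos in auto)
    then have "(u x - u z) * (e x - e z) \<le> 1 / K * (t / 2 * (e x + e z))"
      by (metis abs_ge_self abs_mult order.trans)
    then show ?thesis
      by (intro mult_left_mono weight_nonneg) (simp add: c_def)
  qed (simp add: weight_eq_0_if_not_adj)
  have "(\<Sum>x\<in>UNIV. m x * f x * exp (t * f x)) = - (\<Sum>x\<in>UNIV. m x * e x * laplacian w m u x)"
    by (simp add: poisson e_def mult_ac sum_negf)
  also have "\<dots> = (\<Sum>x\<in>UNIV. \<Sum>z\<in>UNIV. w x z * ((u x - u z) * (e x - e z))) / 2"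
    by (simp add: green_formula)
  also have "\<dots> \<le> (\<Sum>x\<in>UNIV. \<Sum>z\<in>UNIV. w x z * (c * (e x + e z))) / 2"
    by (intro divide_right_mono sum_mono edge_le) simp
  also have "\<dots> = c * (\<Sum>x\<in>UNIV. \<Sum>z\<in>UNIV. w x z * e x)"
  proof -
    have "w x z * (c * (e x + e z)) = c * (w x z * e x) + c * (w x z * e z)" for x z
      by (simp add: algebra_simps)
    then have "(\<Sum>x\<in>UNIV. \<Sum>z\<in>UNIV. w x z * (c * (e x + e z)))
        = c * (\<Sum>x\<in>UNIV. \<Sum>z\<in>UNIV. w x z * e x) + c * (\<Sum>x\<in>UNIV. \<Sum>z\<in>UNIV. w x z * e z)"
      by (simp add: sum.distrib sum_distrib_left)
    then show ?thesis
      using sum_weight_swap[of "\<lambda>z x. e z"] by simp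
  qed
  also have "\<dots> \<le> c * (\<Sum>x\<in>UNIV. m x * e x)"
    using weight_sum_le_measure \<open>0 \<le> t\<close> K_pos
    by (intro mult_left_mono sum_mono)
       (auto simp: c_def e_def mult.commute[of _ "exp _"] simp flip: sum_distrib_left)
  finally show ?thesis
    by (simp add: c_def e_def)
qed

lemma laplace_transform_le:
  assumes "(\<Sum>x\<in>UNIV. m x) = 1" and "(\<Sum>x\<in>UNIV. m x * f x) = 0" and "grad_norm w f \<le> 1"
    and "0 \<le> t"
  shows "(\<Sum>x\<in>UNIV. m x * exp (t * f x)) \<le> exp (t\<^sup>2 / (4 * K))"
proof -
  have "(\<Sum>x\<in>UNIV. m x * exp (t * f x)) \<le> (\<Sum>x\<in>UNIV. m x * exp (0 * f x)) * exp (1 / (2 * K) * t\<^sup>2 / 2)"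
  proof (rule herbst_bound[OF _ _ \<open>0 \<le> t\<close>])
    show "((\<lambda>s. \<Sum>x\<in>UNIV. m x * exp (s * f x)) has_real_derivative (\<Sum>x\<in>UNIV. m x * f x * exp (s * f x))) (at s)" for s
      by (auto intro!: derivative_eq_intros simp: mult_ac)
    show "(\<Sum>x\<in>UNIV. m x * f x * exp (s * f x)) \<le> 1 / (2 * K) * s * (\<Sum>x\<in>UNIV. m x * exp (s * f x))"
      if "0 \<le> s" for s
      using laplace_transform_deriv_le[OF assms(2,3) that] by simp
  qed
  then show ?thesis
    using assms(1) by simp
qed

lemma concentration:
  assumes "(\<Sum>x\<in>UNIV. m x) = 1" and "(\<Sum>x\<in>UNIV. m x * f x) = 0" and "grad_norm w f \<le> 1"
    and "0 < r"
  shows "(\<Sum>x\<in>{x. f x > r}. m x) \<le> exp (- K * r\<^sup>2)"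
proof -
  define t where "t = 2 * K * r"
  have "0 \<le> t"
    using K_pos \<open>0 < r\<close> by (simp add: t_def)
  have "(\<Sum>x\<in>{x. f x > r}. m x) \<le> exp (- t * r) * (\<Sum>x\<in>UNIV. m x * exp (t * f x))"
    using exponential_chebyshev[OF finite_vertices _ \<open>0 \<le> t\<close>, where m=m and f=f and r=r] measure_pos
    by (simp add: less_imp_le)
  also have "\<dots> \<le> exp (- t * r) * exp (t\<^sup>2 / (4 * K))"
    using laplace_transform_le[OF assms(1-3) \<open>0 \<le> t\<close>] by simp
  also have "\<dots> = exp (- K * r\<^sup>2)"
    using K_pos by (simp add: t_def power2_eq_square field_simps flip: exp_add)
  finally show ?thesis .
qed

end

theorem theorem3p1:
  fixes w :: "'v::countable \<Rightarrow> 'v \<Rightarrow> real" and m :: "'v \<Rightarrow> real"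
    and f :: "'v \<Rightarrow> real" and K r :: real
  assumes "mwgraph w m"
    and "locally_finite w"
    and "connected_graph w"
    and "K > 0"
    and "Deg_max w m \<le> 1"
    and "(m has_sum 1) UNIV"
    and "\<forall>x y. x \<noteq> y \<longrightarrow> ollivier w m x y \<ge> ereal K"
    and "(\<lambda>x. \<bar>m x * f x\<bar>) summable_on UNIV"
    and "(\<Sum>\<^sub>\<infinity>x. m x * f x) = 0"
    and "grad_norm w f \<le> 1"
    and "r > 0"
  shows "(\<Sum>\<^sub>\<infinity>x\<in>{x. f x > r}. m x) \<le> exp (- K * r\<^sup>2)"
proof -
  interpret positively_curved_graph w m K
    by unfold_locales (use assms in auto)
  \<comment> \<open>The graph is finite, so the summability hypothesis on \<open>m f\<close> holds automatically.\<close>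
  have "(\<Sum>x\<in>UNIV. m x) = 1"
    using has_sum_unique[OF has_sum_finite[OF finite_vertices] assms(6)] .
  moreover have "(\<Sum>x\<in>UNIV. m x * f x) = 0"
    using assms(9) finite_vertices by simp
  ultimately have "(\<Sum>x\<in>{x. f x > r}. m x) \<le> exp (- K * r\<^sup>2)"
    using concentration assms(10,11) by blast
  then show ?thesis
    using finite_subset[OF subset_UNIV finite_vertices] by simp
qed

end
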